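(* Let $n,k$ be positive integers with $k\le n$. Then (a) $\mathfrak r_{\triangle_{n,k}}=\sum_{i=0}^{k-1}(-1)^{k+i-1}q_{n-i}\,q_i$; (b) $\mathfrak r_{\triangle_{n,n-k+1}}=\mathfrak r_{\triangle_{n,k}}$.
   Context: Boxes $(r,c)$ are indexed by row $r$ (top to bottom) and column $c$. A connected ribbon corresponding to a composition $\alpha=(\alpha_1,\dots,\alpha_\ell)$ is an edgewise connected set of boxes with $\alpha_r$ consecutive boxes in row $r$, where the leftmost box of row $r$ lies directly above the rightmost box of row $r+1$. Let $\mathbf{P}'=\{1'<1<2'<2<\cdots\}$. For a ribbon $D$, a marked filling is a filling of its boxes by letters of $\mathbf{P}'$ with rows and columns weakly increasing, each column containing at most one unmarked $k$ and each row at most one marked $k'$; the ribbon Schur $Q$-function $\mathfrak r_D$ is $\sum_T x^{c(T)}$ over all such fillings, with $c(T)_i$ the number of entries equal to $i$ or $i'$ (this equals the skew Schur $Q$-function $Q_{\lambda/\mu}$ whenever $D$ is the shifted skew diagram $\widetilde{\lambda/\mu}$). $q_m=Q_{(m)}$ is the Schur $Q$-function of the one-row shape, with $q_0=1$. For $1\le k\le n$, $\triangle_{n,k}$ denotes the ribbon of composition $(1^{k-1},n-k+1)$, i.e. $k-1$ rows of one box followed by a row of $n-k+1$ boxes (equivalently the shifted skew diagram of $\lambda=(n,n-1,\dots,n-k+1)$ over $\mu=(n-1,\dots,n-k+1)$, $\mu=\emptyset$ if $k=1$); thus $\triangle_{n,1}$ is a single row and $\triangle_{n,n}$ a single column of $n$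 boxes. *)

theory Defs
  imports Main "HOL-Library.Poly_Mapping"
begin

text \<open>Letters of P' = {1' < 1 < 2' < 2 < ...} are encoded as positive naturals:
  k' is 2k-1 (odd = marked), k is 2k (even = unmarked); this encoding is order preserving.\<close>

text \<open>Formal power series in x_1, x_2, ... with integer coefficients:
  functions from monomials (finitely supported exponent vectors) to coefficients.\<close>
type_synonym pseries = "(nat \<Rightarrow>\<^sub>0 nat) \<Rightarrow> int"

definition ps_mult :: "pseries \<Rightarrow> pseries \<Rightarrow> pseries" where
  "ps_mult f g c = (\<Sum>p\<in>{p. fst p + snd p = c}. f (fst p) * g (snd p))"

text \<open>Row r (0-based, top to bottom) of the ribbon of composition alpha starts at column rstart alpha r;
  the last row starts in column 0 and the leftmost box of row r is above the rightmost box of row r+1.\<close>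
definition rstart :: "nat list \<Rightarrow> nat \<Rightarrow> nat" where
  "rstart \<alpha> r = (\<Sum>j\<in>{Suc r..<length \<alpha>}. \<alpha> ! j - 1)"

definition ribbon :: "nat list \<Rightarrow> (nat \<times> nat) set" where
  "ribbon \<alpha> = {(r, c). r < length \<alpha> \<and> rstart \<alpha> r \<le> c \<and> c < rstart \<alpha> r + \<alpha> ! r}"

definition marked_filling :: "(nat \<times> nat) set \<Rightarrow> (nat \<times> nat \<Rightarrow> nat) \<Rightarrow> bool" where
  "marked_filling D T \<longleftrightarrow>
     (\<forall>x. x \<notin> D \<longrightarrow> T x = 0) \<and>
     (\<forall>x\<in>D. 1 \<le> T x) \<and>
     (\<forall>r c c'. (r, c) \<in> D \<longrightarrow> (r, c') \<in> D \<longrightarrow> c < c' \<longrightarrow> T (r, c) \<le> T (r, c')) \<and>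
     (\<forall>r r' c. (r, c) \<in> D \<longrightarrow> (r', c) \<in> D \<longrightarrow> r < r' \<longrightarrow> T (r, c) \<le> T (r', c)) \<and>
     (\<forall>r r' c. (r, c) \<in> D \<longrightarrow> (r', c) \<in> D \<longrightarrow> r \<noteq> r' \<longrightarrow> T (r, c) = T (r', c) \<longrightarrow> odd (T (r, c))) \<and>
     (\<forall>r c c'. (r, c) \<in> D \<longrightarrow> (r, c') \<in> D \<longrightarrow> c \<noteq> c' \<longrightarrow> T (r, c) = T (r, c') \<longrightarrow> even (T (r, c)))"

definition content :: "(nat \<times> nat) set \<Rightarrow> (nat \<times> nat \<Rightarrow> nat) \<Rightarrow> nat \<Rightarrow> nat" where
  "content D T i = card {x\<in>D. T x = 2 * i - 1 \<or> T x = 2 * i}"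

text \<open>Ribbon Schur Q-function: coefficient of the monomial x^c.\<close>
definition rQ :: "(nat \<times> nat) set \<Rightarrow> pseries" where
  "rQ D c = int (card {T. marked_filling D T \<and> (\<forall>i. content D T i = Poly_Mapping.lookup c i)})"

definition qQ :: "nat \<Rightarrow> pseries" where
  "qQ m = rQ (ribbon [m])"

definition tri :: "nat \<Rightarrow> nat \<Rightarrow> (nat \<times> nat) set" where
  "tri n k = ribbon (replicate (k - 1) 1 @ [n - k + 1])"

end

theory Submission
  imports Defs "HOL-Library.Multiset" "HOL-Library.FuncSet"
begin

text \<open>Read a filling of the hook \<open>tri n k\<close> as a pair of words: the entries of its column above the
  corner, and the entries of its row. The row word may repeat only unmarked letters and the column
  (with the corner) only marked ones, so \<open>qQ m\<close> counts row words of length \<open>m\<close> and, after toggling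
  all marks, also column words. Hence \<open>q(n - i) q(i)\<close> counts pairs \<open>(u, v)\<close> of a row word and a
  column word. If \<open>v\<close> followed by the last letter of \<open>u\<close> is still a column word, the pair is a
  filling of a hook with that letter in the corner; otherwise \<open>u\<close> followed by the last letter of
  \<open>v\<close> is a row word, and the pair becomes a filling of the hook with one box more in the row.
  This Pieri rule gives \<open>q(n - i) q(i) = r(tri n (i + 1)) + r(tri n i)\<close> for \<open>0 < i < n\<close>. As
  \<open>r(tri n 1) = q(n) = r(tri n n)\<close>, unrolling the recurrence gives the alternating sum, and
  comparing it with the recurrence at \<open>n - i\<close>, using commutativity of the product, gives the
  symmetry.\<close>

section \<open>Words and their monomials\<close>

definition letter_var :: "nat \<Rightarrow> nat" where
  "letter_var x = (x + 1) div 2"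

lemma letter_var_eq_iff: "letter_var x = i \<longleftrightarrow> x = 2 * i - 1 \<or> x = 2 * i"
  unfolding letter_var_def by presburger

lemma le_double_letter_var: "x \<le> 2 * letter_var x"
  unfolding letter_var_def by presburger

definition word_monomial :: "nat list \<Rightarrow> nat \<Rightarrow>\<^sub>0 nat" where
  "word_monomial w = Abs_poly_mapping (count (image_mset letter_var (mset w)))"

lemma lookup_word_monomial:
  "Poly_Mapping.lookup (word_monomial w) = count (image_mset letter_var (mset w))"
  unfolding word_monomial_def
  by (rule lookup_Abs_poly_mapping) (simp add: count_eq_zero_iff)

lemma word_monomial_Nil [simp]: "word_monomial [] = 0"
  by (rule poly_mapping_eqI) (simp add: lookup_word_monomial)

lemma word_monomial_append: "word_monomial (u @ v) = word_monomial u + word_monomial v"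
  by (rule poly_mapping_eqI) (simp add: lookup_add lookup_word_monomial)

lemma word_monomial_move_last:
  "v \<noteq> [] \<Longrightarrow> word_monomial (butlast v @ u @ [last v]) = word_monomial (u @ v)"
proof -
  assume "v \<noteq> []"
  then have "word_monomial (u @ v) = word_monomial (u @ butlast v @ [last v])"
    by simp
  then show ?thesis
    by (simp add: word_monomial_append ac_simps)
qed

lemma keys_word_monomial: "Poly_Mapping.keys (word_monomial w) = letter_var ` set w"
  by (auto simp: in_keys_iff lookup_word_monomial count_eq_zero_iff)

lemma finite_words_with_keys:
  assumes "finite K"
  shows "finite {w. length w = m \<and> Poly_Mapping.keys (word_monomial w) \<subseteq> K}"
proof (rule finite_subset)
  show "finite {w. set w \<subseteq> {..2 * Max (insert 0 K)} \<and> length w = m}"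
    by (rule finite_lists_length_eq) simp
  have "x \<le> 2 * Max (insert 0 K)" if "letter_var x \<in> K" for x
  proof -
    have "letter_var x \<le> Max (insert 0 K)"
      using assms that by (intro Max_ge) auto
    then show ?thesis using le_double_letter_var[of x] by linarith
  qed
  then show "{w. length w = m \<and> Poly_Mapping.keys (word_monomial w) \<subseteq> K}
      \<subseteq> {w. set w \<subseteq> {..2 * Max (insert 0 K)} \<and> length w = m}"
    by (auto simp: keys_word_monomial)
qed

lemma count_mset_map_upt: "count (mset (map f [0..<N])) i = card {j. j < N \<and> f j = i}"
  unfolding count_mset count_list_eq_length_filter length_filter_conv_card
  by (rule arg_cong[where f = card]) auto

text \<open>A row of a marked filling reads as a word satisfying \<open>sorted_rep even\<close> (only unmarked letters
  may repeat), a column as one satisfying \<open>sorted_rep odd\<close>.\<close>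

definition sorted_rep :: "(nat \<Rightarrow> bool) \<Rightarrow> nat list \<Rightarrow> bool" where
  "sorted_rep P = sorted_wrt (\<lambda>x y. x < y \<or> x = y \<and> P x)"

lemma sorted_rep_Nil [simp]: "sorted_rep P []"
  and sorted_rep_single [simp]: "sorted_rep P [x]"
  by (simp_all add: sorted_rep_def)

lemma sorted_rep_iff_nth:
  "sorted_rep P w \<longleftrightarrow> (\<forall>i j. i < j \<longrightarrow> j < length w \<longrightarrow> w ! i < w ! j \<or> w ! i = w ! j \<and> P (w ! i))"
  unfolding sorted_rep_def sorted_wrt_iff_nth_less by blast

lemma sorted_rep_map_upt_iff_pairwise:
  "sorted_rep P (map f [0..<m]) \<longleftrightarrow>
     (\<forall>i<m. \<forall>j<m. (i < j \<longrightarrow> f i \<le> f j) \<and> (i \<noteq> j \<longrightarrow> f i = f j \<longrightarrow> P (f i)))"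
  (is "_ \<longleftrightarrow> ?pairwise")
proof -
  have "sorted_rep P (map f [0..<m]) \<longleftrightarrow>
      (\<forall>i j. i < j \<longrightarrow> j < m \<longrightarrow> f i < f j \<or> f i = f j \<and> P (f i))"
    by (auto simp: sorted_rep_iff_nth)
  also have "\<dots> \<longleftrightarrow> ?pairwise"
  proof
    assume R: "\<forall>i j. i < j \<longrightarrow> j < m \<longrightarrow> f i < f j \<or> f i = f j \<and> P (f i)"
    show ?pairwise
    proof (intro allI impI conjI)
      fix i j assume "i < m" "j < m"
      show "i < j \<Longrightarrow> f i \<le> f j"
        using R \<open>j < m\<close> by fastforce
      show "i \<noteq> j \<Longrightarrow> f i = f j \<Longrightarrow> P (f i)"
        using R \<open>i < m\<close> \<open>j < m\<close> by (metis less_irrefl nat_neq_iff)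
    qed
  next
    assume ?pairwise
    then show "\<forall>i j. i < j \<longrightarrow> j < m \<longrightarrow> f i < f j \<or> f i = f j \<and> P (f i)"
      by (metis le_neq_implies_less less_imp_neq order.strict_trans)
  qed
  finally show ?thesis .
qed

lemma sorted_rep_iff_count:
  "sorted_rep P w \<longleftrightarrow> sorted w \<and> (\<forall>x. \<not> P x \<longrightarrow> count (mset w) x \<le> 1)"
proof -
  have count_le_1: "count (mset w) x \<le> 1 \<longleftrightarrow>
      (\<forall>i j. i < length w \<longrightarrow> j < length w \<longrightarrow> w ! i = x \<longrightarrow> w ! j = x \<longrightarrow> i = j)" for x
  proof -
    have "count (mset w) x = card {i. i < length w \<and> w ! i = x}"
      by (simp add: count_mset count_list_eq_length_filter length_filter_conv_card eq_commute)
    then show ?thesis by (auto simp: card_le_Suc0_iff_eq)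
  qed
  show ?thesis
    unfolding sorted_rep_iff_nth sorted_iff_nth_mono_less count_le_1
  proof (intro iffI conjI allI impI)
    fix i j x
    assume rep: "\<forall>i j. i < j \<longrightarrow> j < length w \<longrightarrow> w ! i < w ! j \<or> w ! i = w ! j \<and> P (w ! i)"
    show "i < j \<Longrightarrow> j < length w \<Longrightarrow> w ! i \<le> w ! j"
      using rep by fastforce
    assume "\<not> P x" "i < length w" "j < length w" "w ! i = x" "w ! j = x"
    then show "i = j"
      using rep by (metis nat_neq_iff)
  next
    fix i j
    assume "(\<forall>i j. i < j \<longrightarrow> j < length w \<longrightarrow> w ! i \<le> w ! j) \<and>
      (\<forall>x. \<not> P x \<longrightarrow> (\<forall>i j. i < length w \<longrightarrow> j < length w \<longrightarrow> w ! i = x \<longrightarrow> w ! j = x \<longrightarrow> i = j))"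
      and "i < j" "j < length w"
    then show "w ! i < w ! j \<or> w ! i = w ! j \<and> P (w ! i)"
      by (metis le_neq_implies_less less_imp_neq order.strict_trans)
  qed
qed

lemma sorted_rep_snoc:
  assumes "w \<noteq> []"
  shows "sorted_rep P (w @ [x]) \<longleftrightarrow> sorted_rep P w \<and> (last w < x \<or> last w = x \<and> P x)"
proof -
  have "transp (\<lambda>x y :: nat. x < y \<or> x = y \<and> P x)"
    by (auto intro: transpI)
  then show ?thesis
    using assms unfolding sorted_rep_def
    by (auto simp: successively_conv_sorted_wrt[symmetric] successively_append_iff)
qed

lemma sorted_rep_butlast: "sorted_rep P (w @ [x]) \<Longrightarrow> sorted_rep P w"
  by (simp add: sorted_rep_def sorted_wrt_append)

lemma row_col_exchange:
  assumes "u \<noteq> []" "v \<noteq> []" "sorted_rep even u" "sorted_rep odd v"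
  shows "sorted_rep odd (v @ [last u]) \<longleftrightarrow> \<not> sorted_rep even (u @ [last v])"
  using assms by (auto simp: sorted_rep_snoc)

definition words :: "(nat \<Rightarrow> bool) \<Rightarrow> nat \<Rightarrow> nat list set" where
  "words P m = {w. length w = m \<and> 0 \<notin> set w \<and> sorted_rep P w}"

lemma words_Suc_ne_Nil: "w \<in> words P (Suc m) \<Longrightarrow> w \<noteq> []"
  by (auto simp: words_def)

lemma last_words_Suc_pos:
  assumes "w \<in> words P (Suc m)"
  shows "0 < last w"
proof -
  have "last w \<in> set w"
    using words_Suc_ne_Nil[OF assms] by simp
  with assms show ?thesis
    unfolding words_def by (metis gr0I mem_Collect_eq)
qed

lemma words_butlast: "w @ [x] \<in> words P (Suc m) \<Longrightarrow> w \<in> words P m"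
  by (auto simp: words_def dest: sorted_rep_butlast)

lemma zero_notin_map_upt_Suc: "0 \<notin> set (map f [0..<Suc m]) \<longleftrightarrow> (\<forall>j\<le>m. 1 \<le> (f j :: nat))"
  by (simp add: image_iff Suc_le_eq Ball_def less_Suc_eq_le eq_commute[of 0] del: upt_Suc)

lemma finite_words_monomial: "finite {w \<in> words P m. word_monomial w = c}"
  by (rule finite_subset[OF _ finite_words_with_keys[of "Poly_Mapping.keys c" m]])
     (auto simp: words_def)

definition toggle_mark :: "nat \<Rightarrow> nat" where
  "toggle_mark x = (if odd x then x + 1 else x - 1)"

lemma toggle_mark_toggle_mark [simp]: "toggle_mark (toggle_mark x) = x"
  by (simp add: toggle_mark_def)

lemma letter_var_toggle_mark [simp]: "letter_var (toggle_mark x) = letter_var x"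
  unfolding toggle_mark_def letter_var_def by presburger

lemma toggle_mark_eq_0_iff [simp]: "toggle_mark x = 0 \<longleftrightarrow> x = 0"
  unfolding toggle_mark_def by presburger

lemma even_toggle_mark: "x \<noteq> 0 \<Longrightarrow> even (toggle_mark x) \<longleftrightarrow> odd x"
  by (simp add: toggle_mark_def)

lemma toggle_mark_eq_iff: "toggle_mark x = y \<longleftrightarrow> x = toggle_mark y"
  by (metis toggle_mark_toggle_mark)

lemma count_image_toggle_mark: "count (image_mset toggle_mark M) x = count M (toggle_mark x)"
  by (induction M) (auto simp: toggle_mark_eq_iff)

lemma sort_toggle_mark_words:
  assumes PQ: "\<And>x. x \<noteq> 0 \<Longrightarrow> Q (toggle_mark x) \<longleftrightarrow> P x"
    and w: "w \<in> words P m"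
  shows "sort (map toggle_mark w) \<in> words Q m"
proof -
  from w have z: "0 \<notin> set w" and rep: "\<forall>x. \<not> P x \<longrightarrow> count (mset w) x \<le> 1"
    by (auto simp: words_def sorted_rep_iff_count)
  have "count (mset (map toggle_mark w)) x \<le> 1" if "\<not> Q x" for x
  proof (cases "x = 0")
    case True
    then show ?thesis
      using z by (simp add: count_image_toggle_mark toggle_mark_def le_Suc_eq)
  next
    case False
    then show ?thesis
      using that rep PQ[of "toggle_mark x"] by (simp add: count_image_toggle_mark)
  qed
  then show ?thesis
    using w by (auto simp: words_def sorted_rep_iff_count)
qed

lemma card_words_even_odd:
  "card {w \<in> words even m. word_monomial w = c} = card {w \<in> words odd m. word_monomial w = c}"
proof (rule bij_betw_same_card[of "\<lambda>w. sort (map toggle_mark w)"],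
    rule bij_betw_byWitness[where f' = "\<lambda>w. sort (map toggle_mark w)"])
  let ?t = "\<lambda>w. sort (map toggle_mark w)"
  have inv: "?t (?t w) = w" if "w \<in> words P m" for P w
    using that by (intro properties_for_sort) (auto simp: words_def sorted_rep_iff_count multiset.map_comp comp_def)
  have mon: "word_monomial (?t w) = word_monomial w" for w
    by (simp add: word_monomial_def multiset.map_comp comp_def)
  show "\<forall>w\<in>{w \<in> words even m. word_monomial w = c}. ?t (?t w) = w"
    "\<forall>w\<in>{w \<in> words odd m. word_monomial w = c}. ?t (?t w) = w"
    using inv by auto
  show "?t ` {w \<in> words even m. word_monomial w = c} \<subseteq> {w \<in> words odd m. word_monomial w = c}"
    "?t ` {w \<in> words odd m. word_monomial w = c} \<subseteq> {w \<in> words even m. word_monomial w = c}"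
    using sort_toggle_mark_words[of odd even] sort_toggle_mark_words[of even odd] mon
    by (auto simp: even_toggle_mark)
qed

lemma finite_dominated_poly_mappings:
  "finite {q :: 'a \<Rightarrow>\<^sub>0 nat. \<forall>i. Poly_Mapping.lookup q i \<le> Poly_Mapping.lookup c i}"
  (is "finite ?B")
proof -
  let ?r = "\<lambda>q. restrict (Poly_Mapping.lookup q) (Poly_Mapping.keys c)"
  have "inj_on ?r ?B"
  proof (rule inj_onI)
    fix p q assume "p \<in> ?B" "q \<in> ?B" and eq: "?r p = ?r q"
    show "p = q"
    proof (rule poly_mapping_eqI)
      fix i show "Poly_Mapping.lookup p i = Poly_Mapping.lookup q i"
        using \<open>p \<in> ?B\<close> \<open>q \<in> ?B\<close> fun_cong[OF eq, of i]
        by (cases "i \<in> Poly_Mapping.keys c") (auto simp: in_keys_iff dest!: spec[of _ i])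
    qed
  qed
  moreover have "?r ` ?B \<subseteq> (\<Pi>\<^sub>E i\<in>Poly_Mapping.keys c. {..Poly_Mapping.lookup c i})"
    by auto
  ultimately show ?thesis
    by (meson finite_PiE finite_atMost finite_imageD finite_keys finite_subset)
qed

lemma finite_decompositions:
  "finite {p :: ('a \<Rightarrow>\<^sub>0 nat) \<times> ('a \<Rightarrow>\<^sub>0 nat). fst p + snd p = c}"
proof (rule finite_subset)
  let ?B = "{q :: 'a \<Rightarrow>\<^sub>0 nat. \<forall>i. Poly_Mapping.lookup q i \<le> Poly_Mapping.lookup c i}"
  show "{p. fst p + snd p = c} \<subseteq> ?B \<times> ?B"
    by (auto simp: lookup_add)
  show "finite (?B \<times> ?B)"
    using finite_dominated_poly_mappings by blast
qed

lemma ps_mult_card_fibres: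
  fixes \<mu> :: "'a \<Rightarrow> nat \<Rightarrow>\<^sub>0 nat" and \<nu> :: "'b \<Rightarrow> nat \<Rightarrow>\<^sub>0 nat"
  assumes "\<And>c. finite {x \<in> A. \<mu> x = c}" and "\<And>c. finite {y \<in> B. \<nu> y = c}"
  shows "ps_mult (\<lambda>c. int (card {x \<in> A. \<mu> x = c})) (\<lambda>c. int (card {y \<in> B. \<nu> y = c})) c
    = int (card {(x, y) \<in> A \<times> B. \<mu> x + \<nu> y = c})"
proof -
  let ?F = "\<lambda>p. {x \<in> A. \<mu> x = fst p} \<times> {y \<in> B. \<nu> y = snd p}"
  have "ps_mult (\<lambda>c. int (card {x \<in> A. \<mu> x = c})) (\<lambda>c. int (card {y \<in> B. \<nu> y = c})) c
      = int (\<Sum>p\<in>{p. fst p + snd p = c}. card (?F p))"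
    by (simp add: ps_mult_def card_cartesian_product)
  also have "(\<Sum>p\<in>{p. fst p + snd p = c}. card (?F p)) = card (\<Union>p\<in>{p. fst p + snd p = c}. ?F p)"
    using finite_decompositions assms by (intro card_UN_disjoint[symmetric]) auto
  also have "(\<Union>p\<in>{p. fst p + snd p = c}. ?F p) = {(x, y) \<in> A \<times> B. \<mu> x + \<nu> y = c}"
    by auto
  finally show ?thesis .
qed

lemma ps_mult_commute: "ps_mult f g = ps_mult g f"
proof
  fix c
  show "ps_mult f g c = ps_mult g f c"
    unfolding ps_mult_def
    by (rule sum.reindex_bij_witness[where i = prod.swap and j = prod.swap])
      (auto simp: add.commute mult.commute)
qed

section \<open>Fillings of hooks\<close>

definition hook :: "nat \<Rightarrow> nat \<Rightarrow> (nat \<times> nat) set" where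
  "hook a b = {(r, c). r < a \<and> c = b \<or> r = a \<and> c \<le> b}"

lemma hook_eq_leg_arm: "hook a b = (\<lambda>r. (r, b)) ` {..a} \<union> (\<lambda>j. (a, j)) ` {..b}"
  by (auto simp: hook_def)

lemma tri_eq_hook:
  assumes "1 \<le> k" "k \<le> n"
  shows "tri n k = hook (k - 1) (n - k)"
proof -
  define \<alpha> where "\<alpha> = replicate (k - 1) (1::nat) @ [n - k + 1]"
  have len: "length \<alpha> = k"
    using assms by (simp add: \<alpha>_def)
  have part: "\<alpha> ! r = (if r < k - 1 then 1 else n - k + 1)" if "r < k" for r
    using that assms by (auto simp: nth_append \<alpha>_def)
  have start: "rstart \<alpha> r = (if r < k - 1 then n - k else 0)" if "r < k" for r
  proof -
    have "rstart \<alpha> r = (\<Sum>j\<in>{Suc r..<k}. if j = k - 1 then n - k else 0)"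
      unfolding rstart_def len using assms by (intro sum.cong) (auto simp: part)
    also have "\<dots> = (if r < k - 1 then n - k else 0)"
      using that assms by simp
    finally show ?thesis .
  qed
  show ?thesis
    unfolding tri_def \<alpha>_def[symmetric] ribbon_def hook_def len
    using assms by (auto simp: start part split: if_splits)
qed

lemma ribbon_single_row: "ribbon [Suc b] = hook 0 b"
  by (auto simp: ribbon_def rstart_def hook_def)

lemma hook_row_conditions_iff:
  "(\<forall>r c c'. (r, c) \<in> hook a b \<longrightarrow> (r, c') \<in> hook a b \<longrightarrow> c < c' \<longrightarrow> T (r, c) \<le> T (r, c')) \<and>
   (\<forall>r c c'. (r, c) \<in> hook a b \<longrightarrow> (r, c') \<in> hook a b \<longrightarrow> c \<noteq> c' \<longrightarrow> T (r, c) = T (r, c') \<longrightarrow>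
      even (T (r, c)))
   \<longleftrightarrow> sorted_rep even (map (\<lambda>j. T (a, j)) [0..<Suc b])"
  unfolding sorted_rep_map_upt_iff_pairwise
  by (auto simp: hook_def less_Suc_eq_le)

lemma hook_column_conditions_iff:
  "(\<forall>r r' c. (r, c) \<in> hook a b \<longrightarrow> (r', c) \<in> hook a b \<longrightarrow> r < r' \<longrightarrow> T (r, c) \<le> T (r', c)) \<and>
   (\<forall>r r' c. (r, c) \<in> hook a b \<longrightarrow> (r', c) \<in> hook a b \<longrightarrow> r \<noteq> r' \<longrightarrow> T (r, c) = T (r', c) \<longrightarrow>
      odd (T (r, c)))
   \<longleftrightarrow> sorted_rep odd (map (\<lambda>r. T (r, b)) [0..<Suc a])"
proof -
  have same_column: "c = b \<and> r \<le> a \<and> r' \<le> a"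
    if "(r, c) \<in> hook a b" "(r', c) \<in> hook a b" "r \<noteq> r'" for r r' c
    using that by (auto simp: hook_def)
  have leg: "(r, b) \<in> hook a b \<longleftrightarrow> r \<le> a" for r
    by (auto simp: hook_def)
  have mono: "(\<forall>r r' c. (r, c) \<in> hook a b \<longrightarrow> (r', c) \<in> hook a b \<longrightarrow> r < r' \<longrightarrow> T (r, c) \<le> T (r', c))
      \<longleftrightarrow> (\<forall>r\<le>a. \<forall>r'\<le>a. r < r' \<longrightarrow> T (r, b) \<le> T (r', b))"
  proof (intro iffI allI impI)
    fix r r' c assume "\<forall>r\<le>a. \<forall>r'\<le>a. r < r' \<longrightarrow> T (r, b) \<le> T (r', b)"
      and "(r, c) \<in> hook a b" "(r', c) \<in> hook a b" "r < r'"
    then show "T (r, c) \<le> T (r', c)"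
      using same_column[of r c r'] by simp
  qed (use leg in auto)
  have marked: "(\<forall>r r' c. (r, c) \<in> hook a b \<longrightarrow> (r', c) \<in> hook a b \<longrightarrow> r \<noteq> r' \<longrightarrow> T (r, c) = T (r', c) \<longrightarrow>
        odd (T (r, c)))
      \<longleftrightarrow> (\<forall>r\<le>a. \<forall>r'\<le>a. r \<noteq> r' \<longrightarrow> T (r, b) = T (r', b) \<longrightarrow> odd (T (r, b)))"
  proof (intro iffI allI impI)
    fix r r' c assume odd_leg: "\<forall>r\<le>a. \<forall>r'\<le>a. r \<noteq> r' \<longrightarrow> T (r, b) = T (r', b) \<longrightarrow> odd (T (r, b))"
      and "(r, c) \<in> hook a b" "(r', c) \<in> hook a b" "r \<noteq> r'" "T (r, c) = T (r', c)"
    then have "c = b" "r \<le> a" "r' \<le> a"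
      using same_column by blast+
    with odd_leg \<open>r \<noteq> r'\<close> \<open>T (r, c) = T (r', c)\<close> show "odd (T (r, c))"
      by blast
  qed (use leg in auto)
  show ?thesis
    unfolding sorted_rep_map_upt_iff_pairwise less_Suc_eq_le mono marked
    by (simp add: imp_conjR all_conj_distrib)
qed

lemma hook_positive_iff:
  fixes T :: "nat \<times> nat \<Rightarrow> nat"
  shows "(\<forall>x\<in>hook a b. 1 \<le> T x) \<longleftrightarrow>
     0 \<notin> set (map (\<lambda>j. T (a, j)) [0..<Suc b]) \<and> 0 \<notin> set (map (\<lambda>r. T (r, b)) [0..<Suc a])"
  unfolding zero_notin_map_upt_Suc hook_eq_leg_arm by auto

lemma content_eq_lookup_word_monomial:
  assumes "bij_betw \<pi> {..<N} D"
  shows "content D T i = Poly_Mapping.lookup (word_monomial (map (T \<circ> \<pi>) [0..<N])) i"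
proof -
  have "{x \<in> D. letter_var (T x) = i} = \<pi> ` {j. j < N \<and> letter_var (T (\<pi> j)) = i}"
    using assms by (auto simp: bij_betw_def)
  moreover have "inj_on \<pi> {j. j < N \<and> letter_var (T (\<pi> j)) = i}"
    using assms by (auto simp: bij_betw_def intro: inj_on_subset)
  ultimately have "card {x \<in> D. letter_var (T x) = i} = card {j. j < N \<and> letter_var (T (\<pi> j)) = i}"
    by (simp add: card_image)
  also have "\<dots> = count (mset (map (letter_var \<circ> T \<circ> \<pi>) [0..<N])) i"
    by (simp only: count_mset_map_upt comp_def)
  also have "\<dots> = Poly_Mapping.lookup (word_monomial (map (T \<circ> \<pi>) [0..<N])) i"
    by (simp add: lookup_word_monomial multiset.map_comp comp_assoc)
  finally show ?thesis
    by (simp add: content_def letter_var_eq_iff)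
qed

lemma bij_betw_hook_enumeration:
  "bij_betw (\<lambda>j. if j < a then (j, b) else (a, j - a)) {..<a + Suc b} (hook a b)"
proof (rule bij_betw_imageI)
  show "inj_on (\<lambda>j. if j < a then (j, b) else (a, j - a)) {..<a + Suc b}"
    by (auto simp: inj_on_def split: if_splits)
  show "(\<lambda>j. if j < a then (j, b) else (a, j - a)) ` {..<a + Suc b} = hook a b"
  proof (rule set_eqI, rule iffI)
    fix x assume "x \<in> hook a b"
    then obtain r c where x: "x = (r, c)" and "r < a \<and> c = b \<or> r = a \<and> c \<le> b"
      by (auto simp: hook_def)
    then consider "r < a" "c = b" | "r = a" "c \<le> b" by blast
    then show "x \<in> (\<lambda>j. if j < a then (j, b) else (a, j - a)) ` {..<a + Suc b}"
    proof cases
      case 1 then show ?thesis by (auto simp: x intro: image_eqI[of _ _ r])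
    next
      case 2 then show ?thesis by (auto simp: x intro: image_eqI[of _ _ "a + c"])
    qed
  qed (auto simp: hook_def)
qed

lemma content_hook:
  "content (hook a b) T i = Poly_Mapping.lookup
     (word_monomial (map (\<lambda>r. T (r, b)) [0..<a] @ map (\<lambda>j. T (a, j)) [0..<Suc b])) i"
proof -
  have "map (T \<circ> (\<lambda>j. if j < a then (j, b) else (a, j - a))) [0..<a + Suc b]
      = map (\<lambda>r. T (r, b)) [0..<a] @ map (\<lambda>j. T (a, j)) [0..<Suc b]"
    by (rule nth_equalityI) (auto simp: nth_append simp del: upt_Suc)
  then show ?thesis
    by (simp only: content_eq_lookup_word_monomial[OF bij_betw_hook_enumeration])
qed

lemma marked_filling_hook:
  fixes T :: "nat \<times> nat \<Rightarrow> nat"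
  shows "marked_filling (hook a b) T \<longleftrightarrow> (\<forall>x. x \<notin> hook a b \<longrightarrow> T x = 0) \<and>
     map (\<lambda>r. T (r, b)) [0..<Suc a] \<in> words odd (Suc a) \<and> map (\<lambda>j. T (a, j)) [0..<Suc b] \<in> words even (Suc b)"
  using hook_row_conditions_iff[of a b T] hook_column_conditions_iff[of a b T] hook_positive_iff[of a b T]
  unfolding marked_filling_def words_def mem_Collect_eq length_map length_upt diff_zero
  by argo

definition hook_reading :: "nat \<Rightarrow> nat \<Rightarrow> (nat \<times> nat \<Rightarrow> nat) \<Rightarrow> nat list \<times> nat list" where
  "hook_reading a b T = (map (\<lambda>r. T (r, b)) [0..<a], map (\<lambda>j. T (a, j)) [0..<Suc b])"

definition hook_filling :: "nat \<Rightarrow> nat \<Rightarrow> nat list \<times> nat list \<Rightarrow> nat \<times> nat \<Rightarrow> nat" where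
  "hook_filling a b = (\<lambda>(C, R) (r, j). if r < a \<and> j = b then C ! r else if r = a \<and> j \<le> b then R ! j else 0)"

lemma hook_filling_reading:
  "(\<And>x. x \<notin> hook a b \<Longrightarrow> T x = 0) \<Longrightarrow> hook_filling a b (hook_reading a b T) = T"
  by (auto simp: hook_filling_def hook_reading_def hook_def fun_eq_iff simp del: upt_Suc)

lemma hook_reading_filling:
  "length C = a \<Longrightarrow> length R = Suc b \<Longrightarrow> hook_reading a b (hook_filling a b (C, R)) = (C, R)"
  by (auto simp: hook_filling_def hook_reading_def intro!: nth_equalityI simp del: upt_Suc)

lemma hook_filling_outside: "x \<notin> hook a b \<Longrightarrow> hook_filling a b p x = 0"
  by (auto simp: hook_filling_def hook_def split: prod.splits)

definition hook_words :: "nat \<Rightarrow> nat \<Rightarrow> (nat \<Rightarrow>\<^sub>0 nat) \<Rightarrow> (nat list \<times> nat list) set" where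
  "hook_words a b c = {(C, R). C @ [last R] \<in> words odd (Suc a) \<and> R \<in> words even (Suc b) \<and>
     word_monomial (C @ R) = c}"

lemma fillings_hook_iff:
  fixes T :: "nat \<times> nat \<Rightarrow> nat"
  shows "marked_filling (hook a b) T \<and> (\<forall>i. content (hook a b) T i = Poly_Mapping.lookup c i) \<longleftrightarrow>
     (\<forall>x. x \<notin> hook a b \<longrightarrow> T x = 0) \<and> hook_reading a b T \<in> hook_words a b c"
proof -
  have "map (\<lambda>r. T (r, b)) [0..<a] @ [last (map (\<lambda>j. T (a, j)) [0..<Suc b])]
      = map (\<lambda>r. T (r, b)) [0..<Suc a]"
    by simp
  then show ?thesis
    by (simp add: marked_filling_hook content_hook hook_words_def hook_reading_def
        poly_mapping_eq_iff fun_eq_iff del: upt_Suc)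
qed

lemma rQ_hook: "rQ (hook a b) c = int (card (hook_words a b c))"
proof -
  have "bij_betw (hook_reading a b) {T. (\<forall>x. x \<notin> hook a b \<longrightarrow> T x = 0) \<and> hook_reading a b T \<in> hook_words a b c}
      (hook_words a b c)"
  proof (rule bij_betw_byWitness[where f' = "hook_filling a b"])
    have "length C = a" "length R = Suc b" if "(C, R) \<in> hook_words a b c" for C R
      using that by (auto simp: hook_words_def words_def)
    then have "hook_reading a b (hook_filling a b p) = p" if "p \<in> hook_words a b c" for p
      using that hook_reading_filling by (cases p) blast
    then show "\<forall>p\<in>hook_words a b c. hook_reading a b (hook_filling a b p) = p"
      "hook_filling a b ` hook_words a b c \<subseteq> {T. (\<forall>x. x \<notin> hook a b \<longrightarrow> T x = 0) \<and> hook_reading a b T \<in> hook_words a b c}"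
      by (auto simp: hook_filling_outside)
  qed (use hook_filling_reading in blast)+
  then show ?thesis
    unfolding rQ_def fillings_hook_iff by (simp add: bij_betw_same_card)
qed

lemma card_hook_words_row:
  "card (hook_words 0 b c) = card {w \<in> words even (Suc b). word_monomial w = c}"
proof (rule bij_betw_same_card[of snd], rule bij_betw_byWitness[where f' = "\<lambda>R. ([], R)"])
  show "(\<lambda>R. ([], R)) ` {w \<in> words even (Suc b). word_monomial w = c} \<subseteq> hook_words 0 b c"
    by (auto simp: hook_words_def words_def[of odd] last_words_Suc_pos)
qed (auto simp: hook_words_def words_def)

lemma card_hook_words_col:
  "card (hook_words a 0 c) = card {w \<in> words odd (Suc a). word_monomial w = c}"
proof (rule bij_betw_same_card[of "\<lambda>(C, R). C @ R"],
    rule bij_betw_byWitness[where f' = "\<lambda>w. (butlast w, [last w])"])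
  have single: "R \<in> words even (Suc 0) \<longleftrightarrow> (\<exists>x. R = [x] \<and> x \<noteq> 0)" for R
    by (auto simp: words_def sorted_rep_def length_Suc_conv)
  show "\<forall>p\<in>hook_words a 0 c. (\<lambda>w. (butlast w, [last w])) ((\<lambda>(C, R). C @ R) p) = p"
    "(\<lambda>(C, R). C @ R) ` hook_words a 0 c \<subseteq> {w \<in> words odd (Suc a). word_monomial w = c}"
    by (auto simp: hook_words_def single)
  show "\<forall>w\<in>{w \<in> words odd (Suc a). word_monomial w = c}. (\<lambda>(C, R). C @ R) (butlast w, [last w]) = w"
    "(\<lambda>w. (butlast w, [last w])) ` {w \<in> words odd (Suc a). word_monomial w = c} \<subseteq> hook_words a 0 c"
    by (auto simp: hook_words_def single last_words_Suc_pos words_Suc_ne_Nil)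
qed

lemma qQ_0: "qQ 0 c = (if c = 0 then 1 else 0)"
proof -
  have "ribbon [0] = {}"
    by (auto simp: ribbon_def)
  then have "{T. marked_filling (ribbon [0]) T \<and> (\<forall>i. content (ribbon [0]) T i = Poly_Mapping.lookup c i)}
      = (if c = 0 then {\<lambda>_. 0} else {})"
    by (auto simp: marked_filling_def content_def fun_eq_iff poly_mapping_eq_iff)
  then show ?thesis
    by (simp add: qQ_def rQ_def)
qed

lemma qQ_eq_card_row_words: "qQ m c = int (card {w \<in> words even m. word_monomial w = c})"
proof (cases m)
  case 0
  have "{w \<in> words even 0. word_monomial w = c} = (if c = 0 then {[]} else {})"
    by (auto simp: words_def)
  with 0 show ?thesis
    by (simp add: qQ_0)
next
  case (Suc b)
  then show ?thesis
    by (simp add: qQ_def ribbon_single_row rQ_hook card_hook_words_row)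
qed

lemma qQ_eq_card_col_words: "qQ m c = int (card {w \<in> words odd m. word_monomial w = c})"
  by (simp add: qQ_eq_card_row_words card_words_even_odd)

lemma ps_mult_qQ_0: "ps_mult f (qQ 0) = f"
proof
  fix c
  have "ps_mult f (qQ 0) c = (\<Sum>p\<in>{p. fst p + snd p = c}. if p = (c, 0) then f c else 0)"
    unfolding ps_mult_def by (rule sum.cong) (auto simp: qQ_0)
  also have "\<dots> = f c"
    using finite_decompositions[of c] by simp
  finally show "ps_mult f (qQ 0) c = f c" .
qed

lemma rQ_tri_1: "1 \<le> n \<Longrightarrow> rQ (tri n 1) = qQ n"
  by (simp add: tri_def qQ_def)

lemma rQ_tri_n:
  assumes "1 \<le> n"
  shows "rQ (tri n n) = qQ n"
proof
  fix c
  have "rQ (tri n n) c = int (card (hook_words (n - 1) 0 c))"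
    using assms by (simp add: tri_eq_hook rQ_hook)
  also have "\<dots> = qQ n c"
    using assms by (simp add: card_hook_words_col qQ_eq_card_col_words)
  finally show "rQ (tri n n) c = qQ n c" .
qed

section \<open>The Pieri rule for hooks\<close>

definition row_col_pairs :: "nat \<Rightarrow> nat \<Rightarrow> (nat \<Rightarrow>\<^sub>0 nat) \<Rightarrow> (nat list \<times> nat list) set" where
  "row_col_pairs a b c = {(u, v). u \<in> words even a \<and> v \<in> words odd b \<and> word_monomial (u @ v) = c}"

lemma ps_mult_qQ: "ps_mult (qQ a) (qQ b) c = int (card (row_col_pairs a b c))"
proof -
  have "qQ a = (\<lambda>c. int (card {w \<in> words even a. word_monomial w = c}))"
    by (simp add: fun_eq_iff qQ_eq_card_row_words)
  moreover have "qQ b = (\<lambda>c. int (card {w \<in> words odd b. word_monomial w = c}))"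
    by (simp add: fun_eq_iff qQ_eq_card_col_words)
  ultimately show ?thesis
    by (simp add: ps_mult_card_fibres finite_words_monomial row_col_pairs_def word_monomial_append)
qed

lemma finite_row_col_pairs: "finite (row_col_pairs a b c)"
proof (rule finite_subset)
  let ?W = "\<lambda>m. {w. length w = m \<and> Poly_Mapping.keys (word_monomial w) \<subseteq> Poly_Mapping.keys c}"
  show "row_col_pairs a b c \<subseteq> ?W a \<times> ?W b"
    by (auto simp: row_col_pairs_def words_def keys_word_monomial)
  show "finite (?W a \<times> ?W b)"
    by (simp add: finite_words_with_keys)
qed

lemma card_row_col_pairs_extend_col:
  "card {(u, v) \<in> row_col_pairs (Suc a) b c. sorted_rep odd (v @ [last u])} = card (hook_words b a c)"
proof (rule bij_betw_same_card[of prod.swap], rule bij_betw_byWitness[where f' = prod.swap])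
  show "prod.swap ` {(u, v) \<in> row_col_pairs (Suc a) b c. sorted_rep odd (v @ [last u])} \<subseteq> hook_words b a c"
    by (auto simp: row_col_pairs_def hook_words_def words_def[of odd] word_monomial_append add.commute
        last_words_Suc_pos)
  show "prod.swap ` hook_words b a c \<subseteq> {(u, v) \<in> row_col_pairs (Suc a) b c. sorted_rep odd (v @ [last u])}"
    by (auto simp: row_col_pairs_def hook_words_def word_monomial_append add.commute
        dest: words_butlast) (simp add: words_def)
qed auto

lemma hook_words_of_row_col_pair:
  assumes "(u, v) \<in> row_col_pairs (Suc a) (Suc b) c" and "\<not> sorted_rep odd (v @ [last u])"
  shows "(butlast v, u @ [last v]) \<in> hook_words b (Suc a) c"
proof -
  from assms(1) have u: "u \<in> words even (Suc a)" and v: "v \<in> words odd (Suc b)"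
    and mon: "word_monomial (u @ v) = c"
    by (auto simp: row_col_pairs_def)
  have "sorted_rep even (u @ [last v])"
    using row_col_exchange[of u v] assms(2) u v words_Suc_ne_Nil by (auto simp: words_def)
  with u v mon show ?thesis
    using words_Suc_ne_Nil[OF v] last_words_Suc_pos[OF v]
    by (auto simp: hook_words_def words_def[of even] word_monomial_move_last)
qed

lemma row_col_pair_of_hook_words:
  assumes "(C, R) \<in> hook_words b (Suc a) c"
  shows "(butlast R, C @ [last R]) \<in> row_col_pairs (Suc a) (Suc b) c"
    and "\<not> sorted_rep odd ((C @ [last R]) @ [last (butlast R)])"
proof -
  from assms have C: "C @ [last R] \<in> words odd (Suc b)" and R: "R \<in> words even (Suc (Suc a))"
    and mon: "word_monomial (C @ R) = c"
    by (auto simp: hook_words_def)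
  have R_snoc: "butlast R @ [last R] = R"
    using words_Suc_ne_Nil[OF R] by simp
  then have row: "butlast R \<in> words even (Suc a)"
    using R words_butlast by metis
  show "(butlast R, C @ [last R]) \<in> row_col_pairs (Suc a) (Suc b) c"
    using C row mon words_Suc_ne_Nil[OF R] by (auto simp: row_col_pairs_def word_monomial_move_last)
  show "\<not> sorted_rep odd ((C @ [last R]) @ [last (butlast R)])"
    using row_col_exchange[of "butlast R" "C @ [last R]"] R C R_snoc row words_Suc_ne_Nil[OF row]
    by (auto simp: words_def)
qed

lemma card_row_col_pairs_extend_row:
  "card {(u, v) \<in> row_col_pairs (Suc a) (Suc b) c. \<not> sorted_rep odd (v @ [last u])}
     = card (hook_words b (Suc a) c)"
proof (rule bij_betw_same_card[of "\<lambda>(u, v). (butlast v, u @ [last v])"],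
    rule bij_betw_byWitness[where f' = "\<lambda>(C, R). (butlast R, C @ [last R])"])
  show "\<forall>p\<in>{(u, v) \<in> row_col_pairs (Suc a) (Suc b) c. \<not> sorted_rep odd (v @ [last u])}.
      (\<lambda>(C, R). (butlast R, C @ [last R])) ((\<lambda>(u, v). (butlast v, u @ [last v])) p) = p"
    by (auto simp: row_col_pairs_def dest: words_Suc_ne_Nil)
  show "\<forall>p\<in>hook_words b (Suc a) c.
      (\<lambda>(u, v). (butlast v, u @ [last v])) ((\<lambda>(C, R). (butlast R, C @ [last R])) p) = p"
    by (auto simp: hook_words_def dest: words_Suc_ne_Nil)
  show "(\<lambda>(u, v). (butlast v, u @ [last v])) `
      {(u, v) \<in> row_col_pairs (Suc a) (Suc b) c. \<not> sorted_rep odd (v @ [last u])} \<subseteq> hook_words b (Suc a) c"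
    using hook_words_of_row_col_pair by auto
  show "(\<lambda>(C, R). (butlast R, C @ [last R])) ` hook_words b (Suc a) c
      \<subseteq> {(u, v) \<in> row_col_pairs (Suc a) (Suc b) c. \<not> sorted_rep odd (v @ [last u])}"
    using row_col_pair_of_hook_words by auto
qed

lemma card_row_col_pairs:
  "card (row_col_pairs (Suc a) (Suc b) c) = card (hook_words (Suc b) a c) + card (hook_words b (Suc a) c)"
proof -
  let ?A1 = "{(u, v) \<in> row_col_pairs (Suc a) (Suc b) c. sorted_rep odd (v @ [last u])}"
  let ?A2 = "{(u, v) \<in> row_col_pairs (Suc a) (Suc b) c. \<not> sorted_rep odd (v @ [last u])}"
  have "finite ?A1" "finite ?A2"
    by (rule finite_subset[OF _ finite_row_col_pairs], blast)+
  then have "card (?A1 \<union> ?A2) = card ?A1 + card ?A2"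
    by (rule card_Un_disjoint) blast
  moreover have "?A1 \<union> ?A2 = row_col_pairs (Suc a) (Suc b) c"
    by blast
  ultimately show ?thesis
    by (simp add: card_row_col_pairs_extend_col card_row_col_pairs_extend_row)
qed

lemma qQ_mult_eq_rQ_tri:
  assumes "1 \<le> i" "i < n"
  shows "ps_mult (qQ (n - i)) (qQ i) c = rQ (tri n (Suc i)) c + rQ (tri n i) c"
proof -
  obtain b where b: "i = Suc b"
    using assms(1) by (cases i) auto
  obtain a where a: "n - i = Suc a"
    using assms(2) by (cases "n - i") auto
  have "n - Suc i = a"
    using a by simp
  then have "tri n (Suc i) = hook (Suc b) a" "tri n i = hook b (Suc a)"
    using assms a b by (simp_all add: tri_eq_hook)
  moreover have "ps_mult (qQ (n - i)) (qQ i) c = int (card (row_col_pairs (Suc a) (Suc b) c))"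
    unfolding a by (simp add: ps_mult_qQ b)
  ultimately show ?thesis
    by (simp add: card_row_col_pairs rQ_hook)
qed

lemma rQ_tri_alternating_sum:
  assumes "m < n"
  shows "rQ (tri n (Suc m)) c = (\<Sum>i\<le>m. (-1) ^ (m + i) * ps_mult (qQ (n - i)) (qQ i) c)"
  using assms
proof (induction m)
  case 0
  then show ?case
    using rQ_tri_1[of n] by (simp add: ps_mult_qQ_0)
next
  case (Suc m)
  have "rQ (tri n (Suc (Suc m))) c = ps_mult (qQ (n - Suc m)) (qQ (Suc m)) c - rQ (tri n (Suc m)) c"
    using qQ_mult_eq_rQ_tri[of "Suc m" n c] Suc.prems by simp
  also have "\<dots> = (\<Sum>i\<le>Suc m. (-1) ^ (Suc m + i) * ps_mult (qQ (n - i)) (qQ i) c)"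
    using Suc by (simp add: sum_negf[symmetric] power_add)
  finally show ?case .
qed

lemma rQ_tri_reflect:
  assumes "1 \<le> k" "k \<le> n"
  shows "rQ (tri n (Suc (n - k))) c = rQ (tri n k) c"
  using assms
proof (induction k rule: nat_induct_at_least)
  case base
  then show ?case
    using rQ_tri_1[of n] rQ_tri_n[of n] by simp
next
  case (Suc k)
  have "rQ (tri n (Suc k)) c + rQ (tri n k) c = ps_mult (qQ (n - k)) (qQ k) c"
    using qQ_mult_eq_rQ_tri[of k n c] Suc by simp
  also have "\<dots> = ps_mult (qQ (n - (n - k))) (qQ (n - k)) c"
    using Suc.prems by (simp add: ps_mult_commute)
  also have "\<dots> = rQ (tri n (Suc (n - k))) c + rQ (tri n (n - k)) c"
    using qQ_mult_eq_rQ_tri[of "n - k" n c] Suc by simp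
  finally show ?case
    using Suc by (simp add: Suc_diff_Suc)
qed

theorem mainTheorem9:
  fixes n k :: nat
  assumes "1 \<le> k" and "k \<le> n"
  shows "rQ (tri n k) = (\<lambda>c. \<Sum>i<k. (-1::int) ^ (k + i - 1) * ps_mult (qQ (n - i)) (qQ i) c) \<and>
         rQ (tri n (n - k + 1)) = rQ (tri n k)"
proof
  obtain m where k: "k = Suc m"
    using assms(1) by (cases k) auto
  show "rQ (tri n k) = (\<lambda>c. \<Sum>i<k. (-1::int) ^ (k + i - 1) * ps_mult (qQ (n - i)) (qQ i) c)"
    using rQ_tri_alternating_sum[of m n] assms by (simp add: k lessThan_Suc_atMost fun_eq_iff)
  show "rQ (tri n (n - k + 1)) = rQ (tri n k)"
    using rQ_tri_reflect[OF assms] by (simp add: fun_eq_iff)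
qed

end
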